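(* Let $\delta\in(0,1/2)$ and let $\mathcal{G}$ be a class of functions $\mathcal{Z}\to[-1,1]$. For any $[0,1]$-valued tree $\mathbf{p}$ of depth $n$, any $\mathcal{Z}$-valued tree $\mathbf{z}$ of depth $n$, any $K>0$ and any $\gamma>0$, $$\mathbb{E}\sup_{g\in\mathcal{G}}\Big[\sum_{t:\,\mathbf{p}_t(y)\in[\delta,1-\delta]}\eta(\mathbf{p}_t(y),y_t)g(\mathbf{z}_t(y))-Kg(\mathbf{z}_t(y))^2\Big]\le\frac1\delta\frac{\log\mathcal{N}_\infty(\mathcal{G},\gamma,\mathbf{z})}{\log(1+\frac K8)}+\inf_{\alpha\in(0,\gamma]}\Big\{\frac{4n\alpha}{\delta}+30\sqrt{\frac{2n}{\delta}}\int_\alpha^\gamma\sqrt{\log\mathcal{N}_\infty(\mathcal{G},\rho,\mathbf{z})}\,d\rho+\frac8\delta\int_\alpha^\gamma\log\mathcal{N}_\infty(\mathcal{G},\rho,\mathbf{z})\,d\rho\Big\},$$ where the process $y_1,\dots,y_n$ is defined by $y_t\mid y_1,\dots,y_{t-1}\sim\mathrm{Bernoulli}(\mathbf{p}_t(y_1,\dots,y_{t-1}))$.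
   Context: A $\mathcal{Z}$-valued tree $\mathbf{z}$ of depth $n$ is a sequence of maps $\mathbf{z}_t:\{0,1\}^{t-1}\to\mathcal{Z}$, $t=1,\dots,n$; for $y\in\{0,1\}^n$, $\mathbf{z}_t(y)=\mathbf{z}_t(y_1,\dots,y_{t-1})$. $\eta(p,a)=-\mathbf{1}\{a=1\}p^{-1}+\mathbf{1}\{a=0\}(1-p)^{-1}$. Sequential covering number: a set $V$ of $\mathbb{R}$-valued trees of depth $n$ is a sequential $\gamma$-cover (in $\ell_\infty$) of $\mathcal{G}\subseteq\mathbb{R}^{\mathcal{Z}}$ on $\mathbf{z}$ if for every $g\in\mathcal{G}$ and every $y\in\{0,1\}^n$ there is $\mathbf{v}\in V$ with $\max_{1\le t\le n}|\mathbf{v}_t(y)-g(\mathbf{z}_t(y))|\le\gamma$; $\mathcal{N}_\infty(\mathcal{G},\gamma,\mathbf{z})$ denotes the size of the smallest such cover. *)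

theory Defs
  imports "HOL-Analysis.Analysis"
begin

text \<open>A tree of depth n with values in 'a is represented as a function
  x :: nat => bool list => 'a, where for t in {1..n} the map x_t is
  x t applied to a prefix (y_1,...,y_(t-1)) given as a list of length t-1.
  Booleans encode {0,1} (True = 1).\<close>

definition tree_at :: "(nat \<Rightarrow> bool list \<Rightarrow> 'a) \<Rightarrow> nat \<Rightarrow> bool list \<Rightarrow> 'a" where
  "tree_at x t y = x t (take (t - 1) y)"

definition eta :: "real \<Rightarrow> bool \<Rightarrow> real" where
  "eta p a = (if a then - inverse p else inverse (1 - p))"

definition seq_cover ::
  "nat \<Rightarrow> (nat \<Rightarrow> bool list \<Rightarrow> real) set \<Rightarrow> ('z \<Rightarrow> real) set \<Rightarrow> real
     \<Rightarrow> (nat \<Rightarrow> bool list \<Rightarrow> 'z) \<Rightarrow> bool" where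
  "seq_cover n V G \<gamma> z \<longleftrightarrow>
     (\<forall>g\<in>G. \<forall>y::bool list. length y = n \<longrightarrow>
        (\<exists>v\<in>V. \<forall>t\<in>{1..n}. \<bar>tree_at v t y - g (tree_at z t y)\<bar> \<le> \<gamma>))"

definition seq_cov_num ::
  "nat \<Rightarrow> ('z \<Rightarrow> real) set \<Rightarrow> real \<Rightarrow> (nat \<Rightarrow> bool list \<Rightarrow> 'z) \<Rightarrow> nat" where
  "seq_cov_num n G \<gamma> z = (LEAST k. \<exists>V. finite V \<and> card V = k \<and> seq_cover n V G \<gamma> z)"

definition path_prob :: "nat \<Rightarrow> (nat \<Rightarrow> bool list \<Rightarrow> real) \<Rightarrow> bool list \<Rightarrow> real" where
  "path_prob n p y = (\<Prod>t\<in>{1..n}. if y ! (t - 1) then tree_at p t y else 1 - tree_at p t y)"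

definition tree_expect :: "nat \<Rightarrow> (nat \<Rightarrow> bool list \<Rightarrow> real) \<Rightarrow> (bool list \<Rightarrow> real) \<Rightarrow> real" where
  "tree_expect n p F = (\<Sum>y\<in>{y::bool list. length y = n}. path_prob n p y * F y)"

end

theory Submission
  imports Defs
begin

text \<open>Chaining with an offset along the dyadic radii \<open>\<gamma> / 2 ^ j\<close>, using minimal sequential
  covers at each radius. Against the coarsest cover, every covering tree is soft-thresholded towards
  \<open>0\<close>, so that its quadratic offset \<open>K v\<^sup>2\<close> never exceeds that of the function it approximates;
  on the rounds with \<open>p\<^sub>t \<in> [\<delta>, 1 - \<delta>]\<close> the offset then makes the exponential moment of
  \<open>\<delta> ln (1 + K/8)\<close> times the offset process at most \<open>1\<close>, which gives the first term. The
  remaining links of the chain are increments between consecutive covers; as \<open>|\<eta>| \<le> 1/\<delta>\<close>, each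
  finite class of links has a Bernstein-type exponential moment, so its expected maximum at radius
  \<open>r\<close> is at most \<open>r/2\<close> times the Dudley integrand at \<open>r\<close>, hence at most its integral over
  \<open>[r/2, r]\<close>. Stopping the chain at the radius just above \<open>\<alpha>\<close> leaves a residual of at most
  \<open>4 n \<alpha> / \<delta>\<close>.\<close>

section \<open>Expectations over the tree process\<close>

lemma bool_lists_Suc_eq:
  "{y::bool list. length y = Suc n} = (\<lambda>(y,b). y @ [b]) ` ({y. length y = n} \<times> UNIV)"
proof (rule set_eqI, rule iffI)
  fix x :: "bool list" assume "x \<in> {y. length y = Suc n}"
  then have ne: "x \<noteq> []" and lx: "length x = Suc n" by auto
  show "x \<in> (\<lambda>(y,b). y @ [b]) ` ({y. length y = n} \<times> UNIV)"
    by (rule image_eqI[where x="(butlast x, last x)"]) (use ne lx in simp_all)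
qed auto

lemma path_prob_snoc:
  assumes "length y = n"
  shows "path_prob (Suc n) p (y @ [b]) = path_prob n p y * (if b then p (Suc n) y else 1 - p (Suc n) y)"
proof -
  have prefix: "tree_at x t (y @ [b]) = tree_at x t y" if "t \<le> Suc n" for x :: "nat \<Rightarrow> bool list \<Rightarrow> real" and t
    using assms that by (simp add: tree_at_def)
  have "path_prob (Suc n) p (y @ [b]) =
     (\<Prod>t\<in>{1..n}. if (y@[b]) ! (t - 1) then tree_at p t (y@[b]) else 1 - tree_at p t (y@[b])) *
     (if (y@[b]) ! n then tree_at p (Suc n) (y@[b]) else 1 - tree_at p (Suc n) (y@[b]))"
    unfolding path_prob_def by (simp add: atLeastAtMostSuc_conv mult.commute)
  also have "(\<Prod>t\<in>{1..n}. if (y@[b]) ! (t - 1) then tree_at p t (y@[b]) else 1 - tree_at p t (y@[b]))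
      = path_prob n p y"
    unfolding path_prob_def by (rule prod.cong) (use assms in \<open>auto simp: prefix nth_append\<close>)
  finally show ?thesis using assms by (simp add: tree_at_def nth_append)
qed

lemma tree_expect_Suc:
  "tree_expect (Suc n) p F =
     tree_expect n p (\<lambda>y. p (Suc n) y * F (y @ [True]) + (1 - p (Suc n) y) * F (y @ [False]))"
proof -
  have inj: "inj_on (\<lambda>(y::bool list, b::bool). y @ [b]) A" for A
    by (auto simp: inj_on_def)
  have "tree_expect (Suc n) p F =
      (\<Sum>(y, b)\<in>{y. length y = n} \<times> UNIV. path_prob (Suc n) p (y @ [b]) * F (y @ [b]))"
    unfolding tree_expect_def bool_lists_Suc_eq
    by (subst sum.reindex[OF inj]) (simp add: case_prod_beta)
  also have "\<dots> = (\<Sum>y\<in>{y. length y = n}. \<Sum>b\<in>UNIV. path_prob (Suc n) p (y @ [b]) * F (y @ [b]))"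
    by (subst sum.cartesian_product) (simp add: case_prod_beta)
  also have "\<dots> = (\<Sum>y\<in>{y. length y = n}.
      path_prob n p y * (p (Suc n) y * F (y @ [True]) + (1 - p (Suc n) y) * F (y @ [False])))"
    by (rule sum.cong) (auto simp: UNIV_bool path_prob_snoc algebra_simps)
  finally show ?thesis unfolding tree_expect_def .
qed

lemma tree_expect_cong:
  "(\<And>y. length y = n \<Longrightarrow> F y = H y) \<Longrightarrow> tree_expect n p F = tree_expect n p H"
  unfolding tree_expect_def by (rule sum.cong) auto

lemma path_prob_nonneg:
  assumes "\<forall>t\<in>{1..n}. \<forall>u::bool list. length u = t - 1 \<longrightarrow> 0 \<le> p t u \<and> p t u \<le> 1"
    and "length y = n"
  shows "0 \<le> path_prob n p y"
  unfolding path_prob_def tree_at_def by (rule prod_nonneg) (use assms in auto)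

lemma tree_expect_mono:
  assumes "\<forall>t\<in>{1..n}. \<forall>u::bool list. length u = t - 1 \<longrightarrow> 0 \<le> p t u \<and> p t u \<le> 1"
    and "\<And>y. length y = n \<Longrightarrow> F y \<le> H y"
  shows "tree_expect n p F \<le> tree_expect n p H"
  unfolding tree_expect_def
  by (rule sum_mono) (use assms path_prob_nonneg in \<open>auto intro: mult_left_mono\<close>)

lemma tree_expect_add:
  "tree_expect n p (\<lambda>y. F y + H y) = tree_expect n p F + tree_expect n p H"
  unfolding tree_expect_def by (simp add: distrib_left sum.distrib)

lemma tree_expect_cmult:
  "tree_expect n p (\<lambda>y. c * F y) = c * tree_expect n p F"
  unfolding tree_expect_def by (simp add: sum_distrib_left algebra_simps)

lemma tree_expect_sum:
  "tree_expect n p (\<lambda>y. \<Sum>i\<in>I. F i y) = (\<Sum>i\<in>I. tree_expect n p (F i))"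
  unfolding tree_expect_def by (simp add: sum_distrib_left sum.swap[of _ I])

lemma tree_expect_const: "tree_expect n p (\<lambda>_. c) = c"
proof (induction n)
  case 0
  have "{y::bool list. length y = 0} = {[]}" by auto
  then show ?case by (simp add: tree_expect_def path_prob_def)
next
  case (Suc n)
  then show ?case by (simp add: tree_expect_Suc algebra_simps)
qed

lemma sum_prefixes_snoc:
  assumes "length y = n"
  shows "(\<Sum>t\<in>{1..Suc n}. f t (take (t-1) (y@[b])) ((y@[b])!(t-1)))
       = (\<Sum>t\<in>{1..n}. f t (take (t-1) y) (y!(t-1))) + f (Suc n) y b"
proof -
  have "(\<Sum>t\<in>{1..n}. f t (take (t-1) (y@[b])) ((y@[b])!(t-1))) = (\<Sum>t\<in>{1..n}. f t (take (t-1) y) (y!(t-1)))"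
    by (rule sum.cong) (use assms in \<open>auto simp: nth_append\<close>)
  then show ?thesis using assms by (simp add: atLeastAtMostSuc_conv nth_append add.commute)
qed

lemma tree_expect_exp_sum_le:
  assumes p01: "\<forall>t\<in>{1..n}. \<forall>u::bool list. length u = t - 1 \<longrightarrow> 0 \<le> p t u \<and> p t u \<le> 1"
    and step: "\<forall>t\<in>{1..n}. \<forall>u::bool list. length u = t - 1 \<longrightarrow>
        p t u * exp (f t u True) + (1 - p t u) * exp (f t u False) \<le> exp \<kappa>"
  shows "tree_expect n p (\<lambda>y. exp (\<Sum>t\<in>{1..n}. f t (take (t-1) y) (y!(t-1)))) \<le> exp (real n * \<kappa>)"
  using assms
proof (induction n)
  case 0
  then show ?case by (simp add: tree_expect_const)
next
  case (Suc n)
  define A where "A y = (\<Sum>t\<in>{1..n}. f t (take (t-1) y) (y!(t-1)))" for y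
  define mgf where "mgf y = p (Suc n) y * exp (f (Suc n) y True) + (1 - p (Suc n) y) * exp (f (Suc n) y False)"
    for y
  have p01': "\<forall>t\<in>{1..n}. \<forall>u::bool list. length u = t - 1 \<longrightarrow> 0 \<le> p t u \<and> p t u \<le> 1"
    using Suc.prems(1) by auto
  have "tree_expect (Suc n) p (\<lambda>y. exp (\<Sum>t\<in>{1..Suc n}. f t (take (t-1) y) (y!(t-1))))
      = tree_expect n p (\<lambda>y. exp (A y) * mgf y)"
    unfolding tree_expect_Suc
  proof (rule tree_expect_cong)
    fix y :: "bool list" assume "length y = n"
    then have "(\<Sum>t\<in>{1..Suc n}. f t (take (t-1) (y@[b])) ((y@[b])!(t-1))) = A y + f (Suc n) y b" for b
      unfolding A_def by (rule sum_prefixes_snoc)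
    then show "p (Suc n) y * exp (\<Sum>t\<in>{1..Suc n}. f t (take (t-1) (y@[True])) ((y@[True])!(t-1)))
        + (1 - p (Suc n) y) * exp (\<Sum>t\<in>{1..Suc n}. f t (take (t-1) (y@[False])) ((y@[False])!(t-1)))
        = exp (A y) * mgf y"
      by (simp add: mgf_def exp_add algebra_simps)
  qed
  also have "\<dots> \<le> tree_expect n p (\<lambda>y. exp \<kappa> * exp (A y))"
    by (rule tree_expect_mono[OF p01']) (use Suc.prems(2) in \<open>auto simp: mgf_def mult.commute\<close>)
  also have "\<dots> \<le> exp \<kappa> * exp (real n * \<kappa>)"
    unfolding tree_expect_cmult using Suc.IH[OF p01'] Suc.prems(2) by (simp add: A_def)
  also have "\<dots> = exp (real (Suc n) * \<kappa>)" by (simp add: exp_add[symmetric] algebra_simps)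
  finally show ?case .
qed

section \<open>Exponential moments\<close>

lemma tree_expect_Max_le:
  assumes p01: "\<forall>t\<in>{1..n}. \<forall>u::bool list. length u = t - 1 \<longrightarrow> 0 \<le> p t u \<and> p t u \<le> 1"
    and W: "finite W" "W \<noteq> {}" and l: "l > 0"
    and mgf: "\<And>w. w \<in> W \<Longrightarrow> tree_expect n p (\<lambda>y. exp (l * X w y)) \<le> exp C"
  shows "tree_expect n p (\<lambda>y. Max ((\<lambda>w. X w y) ` W)) \<le> (ln (real (card W)) + C) / l"
proof -
  define A where "A = real (card W) * exp C"
  have card_pos: "real (card W) > 0" using W by (simp add: card_gt_0_iff)
  then have A_pos: "A > 0" unfolding A_def by simp
  txt \<open>Pointwise, \<open>l max X = ln (exp (l max X)) \<le> ln (\<Sum> exp (l X))\<close>, and \<open>ln s \<le> s/A + ln A - 1\<close>.\<close>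
  have pointwise: "l * Max ((\<lambda>w. X w y) ` W) \<le> (1 / A) * (\<Sum>w\<in>W. exp (l * X w y)) + (ln A - 1)" for y
  proof -
    have "Max ((\<lambda>w. X w y) ` W) \<in> (\<lambda>w. X w y) ` W" using W by (intro Max_in) auto
    then obtain w0 where w0: "w0 \<in> W" "Max ((\<lambda>w. X w y) ` W) = X w0 y" by auto
    define s where "s = (\<Sum>w\<in>W. exp (l * X w y))"
    have le_s: "exp (l * X w0 y) \<le> s" unfolding s_def
      by (rule member_le_sum) (use w0 W in auto)
    then have s_pos: "s > 0" using exp_gt_zero order_less_le_trans by blast
    have "l * X w0 y \<le> ln s" using le_s s_pos by (metis ln_exp ln_le_cancel_iff exp_gt_zero)
    also have "ln s = ln (s / A) + ln A" using s_pos A_pos by (simp add: ln_div)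
    also have "ln (s / A) \<le> s / A - 1" using s_pos A_pos by (intro ln_le_minus_one) simp
    finally show ?thesis using w0 unfolding s_def by simp
  qed
  have "l * tree_expect n p (\<lambda>y. Max ((\<lambda>w. X w y) ` W))
      = tree_expect n p (\<lambda>y. l * Max ((\<lambda>w. X w y) ` W))" by (simp add: tree_expect_cmult)
  also have "\<dots> \<le> tree_expect n p (\<lambda>y. (1 / A) * (\<Sum>w\<in>W. exp (l * X w y)) + (ln A - 1))"
    by (rule tree_expect_mono[OF p01]) (rule pointwise)
  also have "\<dots> = (1 / A) * (\<Sum>w\<in>W. tree_expect n p (\<lambda>y. exp (l * X w y))) + (ln A - 1)"
    by (simp only: tree_expect_add tree_expect_cmult tree_expect_const tree_expect_sum)
  also have "\<dots> \<le> (1 / A) * (\<Sum>w\<in>W. exp C) + (ln A - 1)"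
    using mgf A_pos by (intro add_right_mono mult_left_mono sum_mono) auto
  also have "\<dots> = ln (real (card W)) + C" unfolding A_def using card_pos by (simp add: ln_mult)
  finally show ?thesis using l by (simp add: field_simps mult.commute)
qed

lemma exp_le_quadratic:
  fixes u A :: real
  assumes "u \<le> A" "A > 0"
  shows "exp u \<le> 1 + u + u\<^sup>2 * ((exp A - 1) / A)"
proof -
  have key: "exp u - 1 - u \<le> u * (exp u - 1)"
    using exp_ge_add_one_self[of "-u"] mult_left_mono[of "1 - u" "exp (-u)" "exp u"]
    by (simp add: exp_minus algebra_simps)
  show ?thesis
  proof (cases "u \<ge> 0")
    case True
    define t where "t = u / A"
    have t01: "0 \<le> t" "t \<le> 1" and tA: "t * A = u" using True assms by (auto simp: t_def field_simps)
    have "exp ((1 - t) * 0 + t * A) \<le> (1 - t) * exp 0 + t * exp A"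
      using convex_onD[OF exp_convex, of t 0 A] t01 by simp
    then have "exp u - 1 \<le> t * (exp A - 1)" using tA by (simp add: algebra_simps)
    then have "u * (exp u - 1) \<le> u * (t * (exp A - 1))" using True by (intro mult_left_mono) auto
    also have "\<dots> = u\<^sup>2 * ((exp A - 1) / A)" by (simp add: t_def power2_eq_square)
    finally show ?thesis using key by simp
  next
    case False
    have "exp u - 1 \<ge> u" using exp_ge_add_one_self[of u] by linarith
    then have "u * (exp u - 1) \<le> u\<^sup>2 * 1" using False
      by (simp add: power2_eq_square mult_left_mono_neg)
    also have "\<dots> \<le> u\<^sup>2 * ((exp A - 1) / A)"
      using exp_ge_add_one_self[of A] assms(2) by (intro mult_left_mono) (simp_all add: field_simps)
    finally show ?thesis using key by simp
  qed
qed

lemma exp_three_halves_le: "exp (3/2 :: real) \<le> 11/2"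
proof -
  have "7/8 \<le> exp (-(1/8::real))" using exp_ge_add_one_self[of "-(1/8::real)"] by simp
  then have "exp (1/8::real) \<le> 8/7" by (simp add: exp_minus field_simps)
  then have "exp (1/8::real) ^ 12 \<le> (8/7) ^ 12" by (intro power_mono) auto
  moreover have "exp (3/2::real) = exp (1/8) ^ 12" using exp_of_nat_mult[of 12 "1/8::real"] by simp
  moreover have "(8/7::real) ^ 12 \<le> 11/2" by (simp add: power_divide)
  ultimately show ?thesis by linarith
qed

lemma exp_le_quadratic_three_halves:
  fixes u :: real
  assumes "u \<le> 3/2"
  shows "exp u \<le> 1 + u + 3 * u\<^sup>2"
proof -
  have "u\<^sup>2 * ((exp (3/2) - 1) / (3/2::real)) \<le> u\<^sup>2 * 3"
    using exp_three_halves_le by (intro mult_left_mono) auto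
  then show ?thesis using exp_le_quadratic[OF assms] by simp
qed

lemma inverse_add_inverse_one_minus_le:
  fixes p \<delta> :: real
  assumes "0 < \<delta>" "\<delta> < 1/2" "\<delta> \<le> p" "p \<le> 1 - \<delta>"
  shows "1 / p + 1 / (1 - p) \<le> 2 / \<delta>"
proof -
  have "(p - \<delta>) * (1 - \<delta> - p) \<ge> 0" using assms by (intro mult_nonneg_nonneg) auto
  moreover have "\<delta> * \<delta> \<le> \<delta> * (1/2)" using assms by (intro mult_left_mono) auto
  ultimately have "p * (1 - p) \<ge> \<delta> / 2" by (simp add: algebra_simps)
  then have "1 / (p * (1 - p)) \<le> 1 / (\<delta> / 2)" using assms by (intro divide_left_mono) auto
  moreover have "1 / p + 1 / (1 - p) = 1 / (p * (1 - p))" using assms by (simp add: field_simps)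
  ultimately show ?thesis by simp
qed

text \<open>The two values of \<open>\<eta>(p, \<cdot>) x\<close> are \<open>-x/p\<close> and \<open>x/(1-p)\<close>: their mean is \<open>0\<close>
  and their mean square is \<open>x\<^sup>2/(p(1-p))\<close>.\<close>
lemma eta_mgf_le_quadratic:
  fixes p \<delta> x c :: real
  assumes \<delta>: "0 < \<delta>" "\<delta> < 1/2" "\<delta> \<le> p" "p \<le> 1 - \<delta>" and c: "0 \<le> c"
    and quad: "\<And>u. \<bar>u\<bar> \<le> \<bar>x\<bar> / \<delta> \<Longrightarrow> exp u \<le> 1 + u + c * u\<^sup>2"
  shows "p * exp (eta p True * x) + (1 - p) * exp (eta p False * x) \<le> 1 + 2 * c * x\<^sup>2 / \<delta>"
proof -
  have pp: "p > 0" "1 - p > 0" using assms by auto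
  define u1 where "u1 = eta p True * x"
  define u0 where "u0 = eta p False * x"
  have u1: "u1 = - x / p" and u0: "u0 = x / (1 - p)" unfolding u1_def u0_def eta_def
    using pp by (simp_all add: field_simps)
  have "\<bar>u1\<bar> \<le> \<bar>x\<bar> / \<delta>" "\<bar>u0\<bar> \<le> \<bar>x\<bar> / \<delta>"
    unfolding u1 u0 using pp assms by (auto simp: abs_div intro!: divide_left_mono)
  then have "p * exp u1 + (1 - p) * exp u0 \<le> p * (1 + u1 + c * u1\<^sup>2) + (1 - p) * (1 + u0 + c * u0\<^sup>2)"
    using quad pp by (intro add_mono mult_left_mono) auto
  also have "\<dots> = (p + (1 - p)) + (p * u1 + (1 - p) * u0) + c * (p * u1\<^sup>2 + (1 - p) * u0\<^sup>2)"
    by (simp add: algebra_simps)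
  also have "\<dots> = 1 + c * x\<^sup>2 * (1 / p + 1 / (1 - p))"
  proof -
    have "p * u1 = - x" "(1 - p) * u0 = x" "p * u1\<^sup>2 = x\<^sup>2 / p" "(1 - p) * u0\<^sup>2 = x\<^sup>2 / (1 - p)"
      using pp unfolding u1 u0 by (simp_all add: power2_eq_square)
    then show ?thesis by (simp only:) (simp add: algebra_simps)
  qed
  also have "\<dots> \<le> 1 + c * x\<^sup>2 * (2 / \<delta>)"
    using inverse_add_inverse_one_minus_le[OF \<delta>] c by (intro add_left_mono mult_left_mono) auto
  finally show ?thesis unfolding u1_def u0_def by (simp add: ac_simps)
qed

lemma eta_mgf_le_exp:
  fixes p \<delta> x b l :: real
  assumes \<delta>: "0 < \<delta>" "\<delta> < 1/2" "\<delta> \<le> p" "p \<le> 1 - \<delta>"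
    and "\<bar>x\<bar> \<le> b" "0 < l" "l * b \<le> 3/2 * \<delta>"
  shows "p * exp (l * (eta p True * x)) + (1 - p) * exp (l * (eta p False * x)) \<le> exp (6 * l\<^sup>2 * b\<^sup>2 / \<delta>)"
proof -
  have lx: "\<bar>l * x\<bar> \<le> l * b" using assms by (simp add: abs_mult mult_left_mono)
  have "\<bar>l * x\<bar> / \<delta> \<le> 3/2" using lx assms by (simp add: field_simps)
  then have "exp u \<le> 1 + u + 3 * u\<^sup>2" if "\<bar>u\<bar> \<le> \<bar>l * x\<bar> / \<delta>" for u
    using that by (intro exp_le_quadratic_three_halves) linarith
  then have "p * exp (eta p True * (l * x)) + (1 - p) * exp (eta p False * (l * x))
      \<le> 1 + 2 * 3 * (l * x)\<^sup>2 / \<delta>"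
    by (intro eta_mgf_le_quadratic[OF \<delta>]) auto
  also have "\<dots> \<le> 1 + 6 * l\<^sup>2 * b\<^sup>2 / \<delta>"
    using power_mono[OF lx, of 2] \<delta> by (simp add: power_mult_distrib divide_right_mono)
  also have "\<dots> \<le> exp (6 * l\<^sup>2 * b\<^sup>2 / \<delta>)" by (rule exp_ge_add_one_self[simplified add.commute])
  finally show ?thesis by (simp add: mult.left_commute)
qed

text \<open>With \<open>l = \<delta> ln (1 + K/8)\<close> the quadratic offset \<open>K x\<^sup>2\<close> absorbs the whole variance term.\<close>
lemma eta_offset_mgf_le_1:
  fixes p \<delta> x K :: real
  assumes \<delta>: "0 < \<delta>" "\<delta> < 1/2" "\<delta> \<le> p" "p \<le> 1 - \<delta>" and "\<bar>x\<bar> \<le> 1" "0 < K"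
  shows "p * exp (\<delta> * ln (1 + K/8) * (eta p True * x - K * x\<^sup>2))
       + (1 - p) * exp (\<delta> * ln (1 + K/8) * (eta p False * x - K * x\<^sup>2)) \<le> 1"
proof -
  define a where "a = ln (1 + K/8)"
  define l where "l = \<delta> * a"
  have a: "a > 0" "exp a - 1 = K / 8" unfolding a_def using assms by simp_all
  have l: "l > 0" unfolding l_def using a \<delta> by simp
  have "\<bar>l * x\<bar> / \<delta> = a * \<bar>x\<bar>" unfolding l_def using \<delta> a by (simp add: abs_mult)
  also have "\<dots> \<le> a" using a assms by (simp add: mult_left_le)
  finally have "\<bar>l * x\<bar> / \<delta> \<le> a" .
  then have "exp u \<le> 1 + u + K / (8 * a) * u\<^sup>2" if "\<bar>u\<bar> \<le> \<bar>l * x\<bar> / \<delta>" for u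
    using exp_le_quadratic[of u a] that a by (simp add: ac_simps)
  then have "p * exp (eta p True * (l * x)) + (1 - p) * exp (eta p False * (l * x))
      \<le> 1 + 2 * (K / (8 * a)) * (l * x)\<^sup>2 / \<delta>"
    using a assms by (intro eta_mgf_le_quadratic[OF \<delta>]) auto
  also have "\<dots> = 1 + (l * K * x\<^sup>2) / 4"
    unfolding l_def using a \<delta> by (simp add: field_simps power2_eq_square)
  also have "\<dots> \<le> exp (l * K * x\<^sup>2)"
  proof -
    have "0 \<le> l * K * x\<^sup>2" using l assms by simp
    then show ?thesis using exp_ge_add_one_self[of "l * K * x\<^sup>2"] by linarith
  qed
  finally have mgf: "p * exp (l * (eta p True * x)) + (1 - p) * exp (l * (eta p False * x))
      \<le> exp (l * K * x\<^sup>2)"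
    by (simp add: mult.left_commute)
  have "p * exp (l * (eta p True * x - K * x\<^sup>2)) + (1 - p) * exp (l * (eta p False * x - K * x\<^sup>2))
      = exp (- (l * K * x\<^sup>2)) * (p * exp (l * (eta p True * x)) + (1 - p) * exp (l * (eta p False * x)))"
    by (simp add: right_diff_distrib exp_diff exp_minus field_simps)
  also have "\<dots> \<le> exp (- (l * K * x\<^sup>2)) * exp (l * K * x\<^sup>2)"
    using mgf by (intro mult_left_mono) auto
  finally show ?thesis unfolding l_def a_def by (simp add: exp_minus)
qed

lemma le_0_of_le_mult_small:
  fixes X V \<Lambda> :: real
  assumes "0 < \<Lambda>" "0 \<le> V" and le: "\<And>l. 0 < l \<Longrightarrow> l \<le> \<Lambda> \<Longrightarrow> X \<le> l * V"
  shows "X \<le> 0"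
proof (rule field_le_epsilon)
  fix e :: real assume e: "0 < e"
  define l where "l = min \<Lambda> (e / (V + 1))"
  have "l > 0" unfolding l_def using assms e by simp
  then have "X \<le> l * V" using le by (simp add: l_def)
  also have "\<dots> \<le> e / (V + 1) * (V + 1)" unfolding l_def using assms e
    by (intro mult_mono) auto
  finally show "X \<le> 0 + e" using assms by simp
qed

text \<open>Optimising \<open>L / l + l V\<close> over \<open>l \<in> (0, \<Lambda>]\<close>: the unconstrained optimum is \<open>l = sqrt (L/V)\<close>;
  if it exceeds \<open>\<Lambda>\<close>, then \<open>\<Lambda> V \<le> sqrt (V L)\<close>.\<close>
lemma le_optimal_tradeoff:
  fixes X L V \<Lambda> :: real
  assumes "L \<ge> 0" "V \<ge> 0" "\<Lambda> > 0"
    and le: "\<And>l. 0 < l \<Longrightarrow> l \<le> \<Lambda> \<Longrightarrow> X \<le> L / l + l * V"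
  shows "X \<le> 2 * sqrt (V * L) + L / \<Lambda>"
proof (cases "L = 0")
  case True
  then have "X \<le> 0" using le assms by (intro le_0_of_le_mult_small[of \<Lambda> V]) auto
  then show ?thesis using True by simp
next
  case False
  then have L: "L > 0" using assms by simp
  show ?thesis
  proof (cases "V > 0 \<and> sqrt (L / V) \<le> \<Lambda>")
    case True
    define l where "l = sqrt (L / V)"
    have "l > 0" unfolding l_def using True L by simp
    have "L / l = sqrt (V * L)" "l * V = sqrt (V * L)"
      unfolding l_def using True L
      by (simp_all add: real_sqrt_divide real_sqrt_mult real_div_sqrt field_simps)
    then have "X \<le> 2 * sqrt (V * L)" using le[OF \<open>l > 0\<close>] True by (simp add: l_def)
    moreover have "0 \<le> L / \<Lambda>" using L assms by simp
    ultimately show ?thesis by linarith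
  next
    case False
    have "\<Lambda> * V \<le> sqrt (V * L)"
    proof (cases "V > 0")
      case True
      then have "\<Lambda> < sqrt (L / V)" using False by simp
      then have "\<Lambda>\<^sup>2 < (sqrt (L / V))\<^sup>2" using assms by (intro power_strict_mono) auto
      then have "\<Lambda>\<^sup>2 < L / V" using True assms by simp
      then have "(\<Lambda> * V)\<^sup>2 \<le> V * L" using True by (simp add: power2_eq_square field_simps)
      then show ?thesis using assms True by (meson real_le_rsqrt)
    qed (use assms in simp)
    moreover have "0 \<le> sqrt (V * L)" using assms by simp
    ultimately show ?thesis using le[OF assms(3)] by linarith
  qed
qed

section \<open>Sequential covers\<close>

lemma seq_cover_mono:
  "seq_cover n V G r z \<Longrightarrow> r \<le> r' \<Longrightarrow> seq_cover n V G r' z"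
  unfolding seq_cover_def by (meson order_trans)

text \<open>Rounding every node value down to a multiple of \<open>r\<close> gives a finite cover.\<close>
lemma finite_seq_cover_exists:
  fixes G :: "('z \<Rightarrow> real) set" and z :: "nat \<Rightarrow> bool list \<Rightarrow> 'z"
  assumes G: "\<forall>g\<in>G. \<forall>x. \<bar>g x\<bar> \<le> 1" and r: "r > 0"
  shows "\<exists>V. finite V \<and> seq_cover n V G r z"
proof -
  define D where "D = {(t, u::bool list). t \<in> {1..n} \<and> length u = t - 1}"
  define M where "M = \<lceil>1 / r\<rceil>"
  define R where "R = (\<lambda>k. real_of_int k * r) ` {-M..M}"
  define tree where "tree f = (\<lambda>t u. if (t, u) \<in> D then f (t, u) else 0)" for f :: "nat \<times> bool list \<Rightarrow> real"
  define round where "round w = real_of_int \<lfloor>w / r\<rfloor> * r" for w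
  have "finite D"
  proof (rule finite_subset)
    show "D \<subseteq> {1..n} \<times> {u::bool list. set u \<subseteq> UNIV \<and> length u \<le> n}" unfolding D_def by auto
    show "finite ({1..n} \<times> {u::bool list. set u \<subseteq> UNIV \<and> length u \<le> n})"
      by (intro finite_cartesian_product finite_lists_length_le) auto
  qed
  then have finite: "finite (tree ` PiE D (\<lambda>_. R))" unfolding R_def by (intro finite_imageI finite_PiE) auto
  have round_in_R: "round w \<in> R" if "\<bar>w\<bar> \<le> 1" for w
  proof -
    have "w / r \<le> 1 / r" "- (1 / r) \<le> w / r"
      using that r divide_right_mono[of w 1 r] divide_right_mono[of "-1" w r] by auto
    then have "\<lfloor>w / r\<rfloor> \<le> \<lceil>1 / r\<rceil>" "\<lfloor>- (1 / r)\<rfloor> \<le> \<lfloor>w / r\<rfloor>"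
      by (meson floor_le_ceiling order_trans floor_mono)+
    then have "\<lfloor>w / r\<rfloor> \<le> M" "- M \<le> \<lfloor>w / r\<rfloor>" unfolding M_def by (simp_all add: floor_minus)
    then show ?thesis unfolding R_def round_def by auto
  qed
  have round_approx: "\<bar>round w - w\<bar> \<le> r" for w
  proof -
    have "real_of_int \<lfloor>w / r\<rfloor> \<le> w / r" "w / r < real_of_int \<lfloor>w / r\<rfloor> + 1" by linarith+
    then have "real_of_int \<lfloor>w / r\<rfloor> * r \<le> w / r * r" "w / r * r < (real_of_int \<lfloor>w / r\<rfloor> + 1) * r"
      using r by (intro mult_right_mono mult_strict_right_mono; simp)+
    then have "round w \<le> w" "w < round w + r" unfolding round_def using r by (simp_all add: algebra_simps)
    then show ?thesis by simp
  qed
  have "seq_cover n (tree ` PiE D (\<lambda>_. R)) G r z"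
    unfolding seq_cover_def
  proof (intro ballI allI impI)
    fix g y assume g: "g \<in> G" and y: "length (y::bool list) = n"
    define f where "f = (\<lambda>tu. if tu \<in> D then round (g (z (fst tu) (snd tu))) else undefined)"
    have "f \<in> PiE D (\<lambda>_. R)" unfolding f_def using round_in_R G g by auto
    moreover have "\<bar>tree_at (tree f) t y - g (tree_at z t y)\<bar> \<le> r" if "t \<in> {1..n}" for t
    proof -
      have "(t, take (t - 1) y) \<in> D" using that y unfolding D_def by auto
      then show ?thesis using round_approx unfolding tree_at_def tree_def f_def by simp
    qed
    ultimately show "\<exists>v\<in>tree ` PiE D (\<lambda>_. R). \<forall>t\<in>{1..n}. \<bar>tree_at v t y - g (tree_at z t y)\<bar> \<le> r"
      by blast
  qed
  with finite show ?thesis by blast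
qed

lemma seq_cov_num_attained:
  fixes G :: "('z \<Rightarrow> real) set" and z :: "nat \<Rightarrow> bool list \<Rightarrow> 'z"
  assumes "\<forall>g\<in>G. \<forall>x. \<bar>g x\<bar> \<le> 1" and "r > 0"
  obtains V where "finite V" "card V = seq_cov_num n G r z" "seq_cover n V G r z"
proof -
  have "\<exists>k V. finite V \<and> card V = k \<and> seq_cover n V G r z"
    using finite_seq_cover_exists[OF assms] by blast
  from LeastI_ex[OF this] show ?thesis using that unfolding seq_cov_num_def by blast
qed

lemma seq_cov_num_pos:
  fixes G :: "('z \<Rightarrow> real) set" and z :: "nat \<Rightarrow> bool list \<Rightarrow> 'z"
  assumes "\<forall>g\<in>G. \<forall>x. \<bar>g x\<bar> \<le> 1" and "G \<noteq> {}" and "r > 0"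
  shows "seq_cov_num n G r z \<ge> 1"
proof -
  obtain V where V: "finite V" "card V = seq_cov_num n G r z" "seq_cover n V G r z"
    using seq_cov_num_attained[OF assms(1,3)] .
  obtain g where "g \<in> G" using assms(2) by blast
  with V(3) have "V \<noteq> {}" unfolding seq_cover_def by (metis empty_iff length_replicate)
  then show ?thesis using V(1,2) by (metis One_nat_def Suc_leI card_gt_0_iff)
qed

lemma seq_cov_num_antimono:
  fixes G :: "('z \<Rightarrow> real) set" and z :: "nat \<Rightarrow> bool list \<Rightarrow> 'z"
  assumes "\<forall>g\<in>G. \<forall>x. \<bar>g x\<bar> \<le> 1" and "r > 0" and "r \<le> r'"
  shows "seq_cov_num n G r' z \<le> seq_cov_num n G r z"
proof -
  obtain V where V: "finite V" "card V = seq_cov_num n G r z" "seq_cover n V G r z"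
    using seq_cov_num_attained[OF assms(1,2)] .
  then have "seq_cover n V G r' z" using seq_cover_mono assms(3) by blast
  then have "seq_cov_num n G r' z \<le> card V"
    unfolding seq_cov_num_def by (intro Least_le) (use V(1) in blast)
  then show ?thesis using V(2) by simp
qed

lemma antitone_integrable_on:
  fixes f :: "real \<Rightarrow> real"
  assumes "\<And>x y. a \<le> x \<Longrightarrow> x \<le> y \<Longrightarrow> y \<le> b \<Longrightarrow> f y \<le> f x"
  shows "f integrable_on {a..b}"
proof -
  have "mono_on {a..b} (\<lambda>x. - f x)" by (rule mono_onI) (use assms in auto)
  then have "(\<lambda>x. - f x) integrable_on {a..b}" by (rule integrable_on_mono_on)
  then show ?thesis using integrable_neg_iff by blast
qed

lemma antitone_integral_ge:
  fixes f :: "real \<Rightarrow> real"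
  assumes "\<And>x y. a \<le> x \<Longrightarrow> x \<le> y \<Longrightarrow> y \<le> b \<Longrightarrow> f y \<le> f x" and "a \<le> b"
  shows "(b - a) * f b \<le> integral {a..b} f"
proof -
  have "integral {a..b} (\<lambda>_. f b) \<le> integral {a..b} f"
    by (rule integral_le) (use assms antitone_integrable_on[OF assms(1)] in auto)
  then show ?thesis using assms(2) by (simp add: content_real)
qed

lemma sum_integral_dyadic:
  fixes f :: "real \<Rightarrow> real" and c :: real
  assumes "c > 0" and "f integrable_on {c / 2 ^ Suc m..c}"
  shows "(\<Sum>j\<le>m. integral {c / 2 ^ Suc j..c / 2 ^ j} f) = integral {c / 2 ^ Suc m..c} f"
  using assms(2)
proof (induction m)
  case (Suc m)
  have "(1::real) \<le> 2 ^ Suc m" by (rule one_le_power) simp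
  then have le: "c / 2 ^ Suc (Suc m) \<le> c / 2 ^ Suc m" "c / 2 ^ Suc m \<le> c"
    using assms(1) by (simp_all add: field_simps)
  have "f integrable_on {c / 2 ^ Suc m..c}"
    using Suc.prems by (rule integrable_on_subinterval) (use le in auto)
  then have "(\<Sum>j\<le>Suc m. integral {c / 2 ^ Suc j..c / 2 ^ j} f)
      = integral {c / 2 ^ Suc (Suc m)..c / 2 ^ Suc m} f + integral {c / 2 ^ Suc m..c} f"
    using Suc.IH by simp
  also have "\<dots> = integral {c / 2 ^ Suc (Suc m)..c} f"
    using Henstock_Kurzweil_Integration.integral_combine[OF le Suc.prems] by simp
  finally show ?case .
qed simp

definition eta_sum ::
  "real \<Rightarrow> nat \<Rightarrow> (nat \<Rightarrow> bool list \<Rightarrow> real) \<Rightarrow> (nat \<Rightarrow> bool list \<Rightarrow> real) \<Rightarrow> bool list \<Rightarrow> real" where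
  "eta_sum \<delta> n p w y = (\<Sum>t\<in>{1..n}. if \<delta> \<le> tree_at p t y \<and> tree_at p t y \<le> 1 - \<delta>
      then eta (tree_at p t y) (y ! (t - 1)) * tree_at w t y else 0)"

definition offset_eta_sum ::
  "real \<Rightarrow> real \<Rightarrow> nat \<Rightarrow> (nat \<Rightarrow> bool list \<Rightarrow> real) \<Rightarrow> (nat \<Rightarrow> bool list \<Rightarrow> real) \<Rightarrow> bool list \<Rightarrow> real" where
  "offset_eta_sum \<delta> K n p w y = (\<Sum>t\<in>{1..n}. if \<delta> \<le> tree_at p t y \<and> tree_at p t y \<le> 1 - \<delta>
      then eta (tree_at p t y) (y ! (t - 1)) * tree_at w t y - K * (tree_at w t y)\<^sup>2 else 0)"

lemma offset_eta_sum_comp: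
  "offset_eta_sum \<delta> K n p (\<lambda>t u. g (z t u)) y =
    (\<Sum>t\<in>{t\<in>{1..n}. \<delta> \<le> tree_at p t y \<and> tree_at p t y \<le> 1 - \<delta>}.
      eta (tree_at p t y) (y ! (t - 1)) * g (tree_at z t y) - K * (g (tree_at z t y))\<^sup>2)"
proof -
  have "tree_at (\<lambda>t u. g (z t u)) t y = g (tree_at z t y)" for t by (simp add: tree_at_def)
  then show ?thesis unfolding offset_eta_sum_def by (simp only: sum.inter_filter[OF finite_atLeastAtMost])
qed

lemma tree_expect_exp_masked_sum_le:
  assumes p01: "\<forall>t\<in>{1..n}. \<forall>u::bool list. length u = t - 1 \<longrightarrow> 0 \<le> p t u \<and> p t u \<le> 1"
    and "\<kappa> \<ge> 0"
    and step: "\<And>t u. t \<in> {1..n} \<Longrightarrow> length u = t - 1 \<Longrightarrow> \<delta> \<le> p t u \<Longrightarrow> p t u \<le> 1 - \<delta> \<Longrightarrow>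
        p t u * exp (l * \<phi> t u True) + (1 - p t u) * exp (l * \<phi> t u False) \<le> exp \<kappa>"
  shows "tree_expect n p (\<lambda>y. exp (l * (\<Sum>t\<in>{1..n}. if \<delta> \<le> tree_at p t y \<and> tree_at p t y \<le> 1 - \<delta>
      then \<phi> t (take (t - 1) y) (y ! (t - 1)) else 0))) \<le> exp (real n * \<kappa>)"
proof -
  define f where "f t u a = l * (if \<delta> \<le> p t u \<and> p t u \<le> 1 - \<delta> then \<phi> t u a else 0)"
    for t and u :: "bool list" and a
  have "tree_expect n p (\<lambda>y. exp (\<Sum>t\<in>{1..n}. f t (take (t-1) y) (y!(t-1)))) \<le> exp (real n * \<kappa>)"
    by (rule tree_expect_exp_sum_le[OF p01]) (use step \<open>\<kappa> \<ge> 0\<close> in \<open>auto simp: f_def\<close>)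
  then show ?thesis unfolding f_def tree_at_def sum_distrib_left by simp
qed

lemma tree_expect_Max_eta_sum_le:
  assumes p01: "\<forall>t\<in>{1..n}. \<forall>u::bool list. length u = t - 1 \<longrightarrow> 0 \<le> p t u \<and> p t u \<le> 1"
    and \<delta>: "0 < \<delta>" "\<delta> < 1/2"
    and W: "finite W" "W \<noteq> {}" and b: "b > 0" and W_bounded: "\<forall>w\<in>W. \<forall>t u. \<bar>w t u\<bar> \<le> b"
  shows "tree_expect n p (\<lambda>y. Max ((\<lambda>w. eta_sum \<delta> n p w y) ` W))
     \<le> 2 * sqrt ((6 * real n * b\<^sup>2 / \<delta>) * ln (real (card W))) + ln (real (card W)) / (3 * \<delta> / (2 * b))"
proof (rule le_optimal_tradeoff)
  show "0 \<le> ln (real (card W))" using W by (simp add: Suc_leI card_gt_0_iff)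
  show "0 \<le> 6 * real n * b\<^sup>2 / \<delta>" "0 < 3 * \<delta> / (2 * b)" using \<delta> b by simp_all
  fix l :: real assume l: "0 < l" "l \<le> 3 * \<delta> / (2 * b)"
  define \<kappa> where "\<kappa> = 6 * l\<^sup>2 * b\<^sup>2 / \<delta>"
  have "tree_expect n p (\<lambda>y. exp (l * eta_sum \<delta> n p w y)) \<le> exp (real n * \<kappa>)" if "w \<in> W" for w
    unfolding eta_sum_def tree_at_def
  proof (rule tree_expect_exp_masked_sum_le[where \<phi> = "\<lambda>t u a. eta (p t u) a * w t u",
        unfolded tree_at_def, OF p01])
    show "0 \<le> \<kappa>" unfolding \<kappa>_def using \<delta> by simp
    fix t u assume "\<delta> \<le> p t u" "p t u \<le> 1 - \<delta>"
    then show "p t u * exp (l * (eta (p t u) True * w t u)) + (1 - p t u) * exp (l * (eta (p t u) False * w t u))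
        \<le> exp \<kappa>"
      unfolding \<kappa>_def using \<delta> l b W_bounded that by (intro eta_mgf_le_exp) (auto simp: field_simps)
  qed
  then have "tree_expect n p (\<lambda>y. Max ((\<lambda>w. eta_sum \<delta> n p w y) ` W)) \<le> (ln (real (card W)) + real n * \<kappa>) / l"
    using tree_expect_Max_le[OF p01 W l(1)] by blast
  also have "\<dots> = ln (real (card W)) / l + l * (6 * real n * b\<^sup>2 / \<delta>)"
    unfolding \<kappa>_def using l by (simp add: field_simps power2_eq_square)
  finally show "tree_expect n p (\<lambda>y. Max ((\<lambda>w. eta_sum \<delta> n p w y) ` W))
      \<le> ln (real (card W)) / l + l * (6 * real n * b\<^sup>2 / \<delta>)" .
qed

lemma tree_expect_Max_offset_eta_sum_le:
  assumes p01: "\<forall>t\<in>{1..n}. \<forall>u::bool list. length u = t - 1 \<longrightarrow> 0 \<le> p t u \<and> p t u \<le> 1"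
    and \<delta>: "0 < \<delta>" "\<delta> < 1/2" and K: "K > 0"
    and W: "finite W" "W \<noteq> {}" and W_bounded: "\<forall>w\<in>W. \<forall>t u. \<bar>w t u\<bar> \<le> 1"
  shows "tree_expect n p (\<lambda>y. Max ((\<lambda>w. offset_eta_sum \<delta> K n p w y) ` W))
     \<le> ln (real (card W)) / (\<delta> * ln (1 + K / 8))"
proof -
  have l: "\<delta> * ln (1 + K / 8) > 0" using \<delta> K by simp
  have "tree_expect n p (\<lambda>y. exp (\<delta> * ln (1 + K / 8) * offset_eta_sum \<delta> K n p w y)) \<le> exp (real n * 0)"
    if "w \<in> W" for w
    unfolding offset_eta_sum_def tree_at_def
  proof (rule tree_expect_exp_masked_sum_le[where \<phi> = "\<lambda>t u a. eta (p t u) a * w t u - K * (w t u)\<^sup>2",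
        unfolded tree_at_def, OF p01])
    fix t u assume "\<delta> \<le> p t u" "p t u \<le> 1 - \<delta>"
    then show "p t u * exp (\<delta> * ln (1 + K / 8) * (eta (p t u) True * w t u - K * (w t u)\<^sup>2))
        + (1 - p t u) * exp (\<delta> * ln (1 + K / 8) * (eta (p t u) False * w t u - K * (w t u)\<^sup>2)) \<le> exp 0"
      using \<delta> K W_bounded that by (simp add: eta_offset_mgf_le_1)
  qed simp
  from tree_expect_Max_le[OF p01 W l this] show ?thesis by simp
qed

section \<open>Chaining decomposition\<close>

definition clip :: "real \<Rightarrow> real \<Rightarrow> real" where
  "clip b x = max (-b) (min b x)"

definition soft_threshold :: "real \<Rightarrow> real \<Rightarrow> real" where
  "soft_threshold c x = (if x > c then x - c else if x < -c then x + c else 0)"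

lemma clip_eq: "\<bar>x\<bar> \<le> b \<Longrightarrow> clip b x = x"
  unfolding clip_def by auto

lemma abs_clip_le: "0 \<le> b \<Longrightarrow> \<bar>clip b x\<bar> \<le> b"
  unfolding clip_def by auto

text \<open>Soft thresholding a \<open>c\<close>-approximation of \<open>a\<close> moves it towards \<open>0\<close> without overshooting \<open>a\<close>;
  this is what lets the quadratic offset of the approximation be dominated by that of \<open>a\<close>.\<close>
lemma soft_threshold_approx:
  assumes "\<bar>v - a\<bar> \<le> c" "c > 0"
  shows "\<bar>soft_threshold c v\<bar> \<le> \<bar>a\<bar>" "\<bar>v - soft_threshold c v\<bar> \<le> c" "\<bar>soft_threshold c v - a\<bar> \<le> 2 * c"
  using assms unfolding soft_threshold_def by auto

lemma eta_mult_le: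
  assumes "0 < \<delta>" "\<delta> \<le> P" "P \<le> 1 - \<delta>" "\<bar>r\<bar> \<le> c"
  shows "eta P B * r \<le> c / \<delta>"
proof -
  have "1 / P \<le> 1 / \<delta>" "1 / (1 - P) \<le> 1 / \<delta>" using assms by (auto intro: divide_left_mono)
  then have "\<bar>eta P B\<bar> \<le> 1 / \<delta>" using assms unfolding eta_def by (auto simp: abs_if divide_inverse)
  then have "\<bar>eta P B\<bar> * \<bar>r\<bar> \<le> (1 / \<delta>) * c" using assms by (intro mult_mono) auto
  then show ?thesis by (simp add: abs_mult[symmetric])
qed

text \<open>One node of the chaining decomposition: with \<open>s\<close> the clipped soft-thresholded \<open>x 0\<close>,
  \<open>a = s + (x\<^sub>0 - s) + \<Sum>\<^sub>j (x\<^sub>j\<^sub>+\<^sub>1 - x\<^sub>j) + (a - x\<^sub>m)\<close>, where every clip is the identity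
  and \<open>s\<^sup>2 \<le> a\<^sup>2\<close>.\<close>
lemma offset_term_le_chain:
  fixes x bj :: "nat \<Rightarrow> real"
  assumes \<delta>: "0 < \<delta>" "\<delta> \<le> P" "P \<le> 1 - \<delta>" and a: "\<bar>a\<bar> \<le> 1" and c: "c > 0" and K: "K \<ge> 0"
    and x0: "\<bar>x 0 - a\<bar> \<le> c" and xm: "\<bar>x m - a\<bar> \<le> r"
    and increments: "\<forall>j<m. \<bar>x (Suc j) - x j\<bar> \<le> bj j"
  shows "eta P B * a - K * a\<^sup>2 \<le>
      (eta P B * clip 1 (soft_threshold c (x 0)) - K * (clip 1 (soft_threshold c (x 0)))\<^sup>2)
      + eta P B * clip c (x 0 - clip 1 (soft_threshold c (x 0)))
      + (\<Sum>j<m. eta P B * clip (bj j) (x (Suc j) - x j)) + r / \<delta>"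
proof -
  define s where "s = soft_threshold c (x 0)"
  have s: "\<bar>s\<bar> \<le> \<bar>a\<bar>" "\<bar>x 0 - s\<bar> \<le> c" using soft_threshold_approx[OF x0 c] by (auto simp: s_def)
  have "(\<Sum>j<m. eta P B * clip (bj j) (x (Suc j) - x j)) = (\<Sum>j<m. eta P B * (x (Suc j) - x j))"
    by (rule sum.cong) (use increments clip_eq in auto)
  also have "\<dots> = eta P B * (x m - x 0)" by (simp add: sum_distrib_left[symmetric] sum_lessThan_telescope)
  finally have telescope: "(\<Sum>j<m. eta P B * clip (bj j) (x (Suc j) - x j)) = eta P B * (x m - x 0)" .
  have "K * s\<^sup>2 \<le> K * a\<^sup>2" using s(1) K by (intro mult_left_mono) (auto simp: abs_le_square_iff)
  moreover have "eta P B * (a - x m) \<le> r / \<delta>"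
    by (rule eta_mult_le[OF \<delta>]) (use xm in \<open>simp add: abs_minus_commute\<close>)
  moreover have clips: "clip 1 s = s" "clip c (x 0 - s) = x 0 - s" using s a by (simp_all add: clip_eq)
  ultimately show ?thesis unfolding s_def[symmetric] telescope clips by (simp add: algebra_simps)
qed

lemma offset_term_le_shrunk:
  assumes \<delta>: "0 < \<delta>" "\<delta> \<le> P" "P \<le> 1 - \<delta>" and a: "\<bar>a\<bar> \<le> 1" and c: "c > 0" and K: "K \<ge> 0"
    and x: "\<bar>x - a\<bar> \<le> c"
  shows "eta P B * a - K * a\<^sup>2 \<le>
      (eta P B * clip 1 (soft_threshold c x) - K * (clip 1 (soft_threshold c x))\<^sup>2) + 2 * c / \<delta>"
proof -
  define s where "s = soft_threshold c x"
  have s: "\<bar>s\<bar> \<le> \<bar>a\<bar>" "\<bar>s - a\<bar> \<le> 2 * c" using soft_threshold_approx[OF x c] by (auto simp: s_def)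
  have "K * s\<^sup>2 \<le> K * a\<^sup>2" using s(1) K by (intro mult_left_mono) (auto simp: abs_le_square_iff)
  moreover have "eta P B * (a - s) \<le> (2 * c) / \<delta>"
    by (rule eta_mult_le[OF \<delta>]) (use s in \<open>simp add: abs_minus_commute\<close>)
  ultimately show ?thesis unfolding s_def[symmetric] using s a clip_eq[of s 1] by (simp add: algebra_simps)
qed

definition shrink :: "real \<Rightarrow> (nat \<Rightarrow> bool list \<Rightarrow> real) \<Rightarrow> nat \<Rightarrow> bool list \<Rightarrow> real" where
  "shrink c v t u = clip 1 (soft_threshold c (v t u))"

text \<open>The links of a chain \<open>V 0, V 1, \<dots>\<close> of approximating trees at scales \<open>c / 2 ^ j\<close>:
  link \<open>0\<close> is the part of \<open>V 0\<close> removed by \<open>shrink\<close>, link \<open>j + 1\<close> the increment from \<open>V j\<close>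
  to \<open>V (j + 1)\<close>, clipped at the size it has whenever both approximate the same function.\<close>
definition chain_link ::
  "real \<Rightarrow> (nat \<Rightarrow> nat \<Rightarrow> bool list \<Rightarrow> real) \<Rightarrow> nat \<Rightarrow> nat \<Rightarrow> bool list \<Rightarrow> real" where
  "chain_link c V j t u = (case j of
      0 \<Rightarrow> clip c (V 0 t u - shrink c (V 0) t u)
    | Suc i \<Rightarrow> clip (3 * (c / 2 ^ j)) (V j t u - V i t u))"

lemma offset_eta_sum_le_chain:
  fixes V :: "nat \<Rightarrow> nat \<Rightarrow> bool list \<Rightarrow> real"
  assumes \<delta>: "0 < \<delta>" and K: "K \<ge> 0" and c: "c > 0" and a: "\<forall>t\<in>{1..n}. \<bar>tree_at a t y\<bar> \<le> 1"
    and cov: "\<And>j t. j \<le> m \<Longrightarrow> t \<in> {1..n} \<Longrightarrow> \<bar>tree_at (V j) t y - tree_at a t y\<bar> \<le> c / 2 ^ j"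
  shows "offset_eta_sum \<delta> K n p a y \<le> offset_eta_sum \<delta> K n p (shrink c (V 0)) y
      + (\<Sum>j\<le>m. eta_sum \<delta> n p (chain_link c V j) y) + real n * (c / 2 ^ m / \<delta>)"
proof -
  define cnd where "cnd t = (\<delta> \<le> tree_at p t y \<and> tree_at p t y \<le> 1 - \<delta>)" for t
  define e where "e t = eta (tree_at p t y) (y ! (t - 1))" for t
  have node: "(if cnd t then e t * tree_at a t y - K * (tree_at a t y)\<^sup>2 else 0)
      \<le> (if cnd t then e t * tree_at (shrink c (V 0)) t y - K * (tree_at (shrink c (V 0)) t y)\<^sup>2 else 0)
        + (\<Sum>j\<le>m. if cnd t then e t * tree_at (chain_link c V j) t y else 0) + c / 2 ^ m / \<delta>"
    if t: "t \<in> {1..n}" for t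
  proof (cases "cnd t")
    case True
    define x where "x j = tree_at (V j) t y" for j
    have increments: "\<forall>j<m. \<bar>x (Suc j) - x j\<bar> \<le> 3 * (c / 2 ^ Suc j)"
    proof (intro allI impI)
      fix j assume "j < m"
      then have "\<bar>x (Suc j) - tree_at a t y\<bar> \<le> c / 2 ^ Suc j" "\<bar>x j - tree_at a t y\<bar> \<le> c / 2 ^ j"
        using cov[of "Suc j" t] cov[of j t] t unfolding x_def by auto
      moreover have "c / 2 ^ j = 2 * (c / 2 ^ Suc j)" by simp
      ultimately show "\<bar>x (Suc j) - x j\<bar> \<le> 3 * (c / 2 ^ Suc j)" by linarith
    qed
    have "e t * tree_at a t y - K * (tree_at a t y)\<^sup>2 \<le>
      (e t * clip 1 (soft_threshold c (x 0)) - K * (clip 1 (soft_threshold c (x 0)))\<^sup>2)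
      + e t * clip c (x 0 - clip 1 (soft_threshold c (x 0)))
      + (\<Sum>j<m. e t * clip (3 * (c / 2 ^ Suc j)) (x (Suc j) - x j)) + c / 2 ^ m / \<delta>"
      using True a t cov[of 0 t] cov[of m t] unfolding e_def x_def cnd_def
      by (intro offset_term_le_chain[OF \<delta>] c K increments[unfolded x_def]) auto
    then show ?thesis
      using True by (simp add: sum.atMost_shift chain_link_def shrink_def tree_at_def x_def)
  qed (use \<delta> c in simp)
  have "offset_eta_sum \<delta> K n p a y \<le> (\<Sum>t\<in>{1..n}.
        (if cnd t then e t * tree_at (shrink c (V 0)) t y - K * (tree_at (shrink c (V 0)) t y)\<^sup>2 else 0)
        + (\<Sum>j\<le>m. if cnd t then e t * tree_at (chain_link c V j) t y else 0) + c / 2 ^ m / \<delta>)"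
    unfolding offset_eta_sum_def cnd_def[symmetric] e_def[symmetric] by (rule sum_mono) (rule node)
  also have "\<dots> = offset_eta_sum \<delta> K n p (shrink c (V 0)) y
      + (\<Sum>j\<le>m. eta_sum \<delta> n p (chain_link c V j) y) + real n * (c / 2 ^ m / \<delta>)"
    unfolding offset_eta_sum_def eta_sum_def cnd_def e_def by (simp add: sum.distrib) (rule sum.swap)
  finally show ?thesis .
qed

lemma offset_eta_sum_le_shrink:
  assumes \<delta>: "0 < \<delta>" and K: "K \<ge> 0" and c: "c > 0" and a: "\<forall>t\<in>{1..n}. \<bar>tree_at a t y\<bar> \<le> 1"
    and cov: "\<forall>t\<in>{1..n}. \<bar>tree_at v t y - tree_at a t y\<bar> \<le> c"
  shows "offset_eta_sum \<delta> K n p a y \<le> offset_eta_sum \<delta> K n p (shrink c v) y + real n * (2 * c / \<delta>)"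
proof -
  define cnd where "cnd t = (\<delta> \<le> tree_at p t y \<and> tree_at p t y \<le> 1 - \<delta>)" for t
  define e where "e t = eta (tree_at p t y) (y ! (t - 1))" for t
  have node: "(if cnd t then e t * tree_at a t y - K * (tree_at a t y)\<^sup>2 else 0)
      \<le> (if cnd t then e t * tree_at (shrink c v) t y - K * (tree_at (shrink c v) t y)\<^sup>2 else 0)
        + 2 * c / \<delta>"
    if t: "t \<in> {1..n}" for t
  proof (cases "cnd t")
    case True
    then show ?thesis using a cov t unfolding e_def cnd_def
      by (simp add: offset_term_le_shrunk[OF \<delta>] c K shrink_def tree_at_def)
  qed (use \<delta> c in simp)
  have "offset_eta_sum \<delta> K n p a y \<le> (\<Sum>t\<in>{1..n}.
        (if cnd t then e t * tree_at (shrink c v) t y - K * (tree_at (shrink c v) t y)\<^sup>2 else 0)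
        + 2 * c / \<delta>)"
    unfolding offset_eta_sum_def cnd_def[symmetric] e_def[symmetric] by (rule sum_mono) (rule node)
  also have "\<dots> = offset_eta_sum \<delta> K n p (shrink c v) y + real n * (2 * c / \<delta>)"
    unfolding offset_eta_sum_def cnd_def e_def by (simp add: sum.distrib)
  finally show ?thesis .
qed

lemma tree_expect_Max_offset_eta_sum_shrink_le:
  assumes p01: "\<forall>t\<in>{1..n}. \<forall>u::bool list. length u = t - 1 \<longrightarrow> 0 \<le> p t u \<and> p t u \<le> 1"
    and \<delta>: "0 < \<delta>" "\<delta> < 1/2" and K: "K > 0" and C: "finite C" "C \<noteq> {}"
  shows "tree_expect n p (\<lambda>y. Max ((\<lambda>w. offset_eta_sum \<delta> K n p w y) ` shrink c ` C))
      \<le> ln (real (card C)) / (\<delta> * ln (1 + K / 8))"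
proof -
  have "\<forall>w\<in>shrink c ` C. \<forall>t u. \<bar>w t u\<bar> \<le> 1" by (auto simp: shrink_def abs_clip_le)
  then have "tree_expect n p (\<lambda>y. Max ((\<lambda>w. offset_eta_sum \<delta> K n p w y) ` shrink c ` C))
      \<le> ln (real (card (shrink c ` C))) / (\<delta> * ln (1 + K / 8))"
    using C by (intro tree_expect_Max_offset_eta_sum_le[OF p01 \<delta> K]) auto
  also have "\<dots> \<le> ln (real (card C)) / (\<delta> * ln (1 + K / 8))"
    using C \<delta> K card_image_le[OF C(1), of "shrink c"] by (intro divide_right_mono) (auto simp: card_gt_0_iff)
  finally show ?thesis .
qed

text \<open>With \<open>b = 3c\<close> and \<open>ln |W| \<le> 2L\<close> the two terms of \<open>tree_expect_Max_eta_sum_le\<close> become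
  \<open>6 c sqrt (12 n L / \<delta>) \<le> 15 c sqrt (2 n L / \<delta>)\<close> and \<open>2 c ln |W| / \<delta> \<le> 4 c L / \<delta>\<close>.\<close>
lemma tree_expect_Max_eta_sum_le_entropy:
  assumes p01: "\<forall>t\<in>{1..n}. \<forall>u::bool list. length u = t - 1 \<longrightarrow> 0 \<le> p t u \<and> p t u \<le> 1"
    and \<delta>: "0 < \<delta>" "\<delta> < 1/2" and W: "finite W" "W \<noteq> {}" and c: "c > 0"
    and W_bounded: "\<forall>w\<in>W. \<forall>t u. \<bar>w t u\<bar> \<le> 3 * c" and card_W: "ln (real (card W)) \<le> 2 * L"
  shows "tree_expect n p (\<lambda>y. Max ((\<lambda>w. eta_sum \<delta> n p w y) ` W))
      \<le> (c / 2) * (30 * sqrt (2 * real n / \<delta>) * sqrt L + (8 / \<delta>) * L)"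
proof -
  let ?Y = "ln (real (card W))"
  have Y: "0 \<le> ?Y" using W by (simp add: Suc_leI card_gt_0_iff)
  with card_W have L: "0 \<le> L" by simp
  have "6 * real n * (3 * c)\<^sup>2 / \<delta> * ?Y \<le> 6 * real n * (3 * c)\<^sup>2 / \<delta> * (2 * L)"
    using card_W \<delta> by (intro mult_left_mono) auto
  also have "\<dots> \<le> (15 / 2 * c * sqrt (2 * real n / \<delta>) * sqrt L)\<^sup>2"
    using \<delta> L c by (simp add: power_mult_distrib field_simps)
  finally have "sqrt (6 * real n * (3 * c)\<^sup>2 / \<delta> * ?Y) \<le> 15 / 2 * c * sqrt (2 * real n / \<delta>) * sqrt L"
    using \<delta> L c by (intro real_le_lsqrt) auto
  moreover have "?Y / (3 * \<delta> / (2 * (3 * c))) \<le> 4 * c * L / \<delta>"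
    using card_W \<delta> c by (simp add: field_simps)
  ultimately have "2 * sqrt (6 * real n * (3 * c)\<^sup>2 / \<delta> * ?Y) + ?Y / (3 * \<delta> / (2 * (3 * c)))
      \<le> (c / 2) * (30 * sqrt (2 * real n / \<delta>) * sqrt L + (8 / \<delta>) * L)"
    by (simp add: algebra_simps)
  moreover have "3 * c > 0" using c by simp
  ultimately show ?thesis using tree_expect_Max_eta_sum_le[OF p01 \<delta> W _ W_bounded] by fastforce
qed

section \<open>Chaining at dyadic radii\<close>

locale offset_chaining =
  fixes \<delta> K \<gamma> :: real and n :: nat
    and G :: "('z \<Rightarrow> real) set"
    and p :: "nat \<Rightarrow> bool list \<Rightarrow> real"
    and z :: "nat \<Rightarrow> bool list \<Rightarrow> 'z"
  assumes \<delta>: "0 < \<delta>" "\<delta> < 1/2"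
    and G_ne: "G \<noteq> {}"
    and G_bounded: "\<forall>g\<in>G. \<forall>x. \<bar>g x\<bar> \<le> 1"
    and p01: "\<forall>t\<in>{1..n}. \<forall>u::bool list. length u = t - 1 \<longrightarrow> 0 \<le> p t u \<and> p t u \<le> 1"
    and K_pos: "K > 0" and \<gamma>_pos: "\<gamma> > 0"
begin

definition radius :: "nat \<Rightarrow> real" where
  "radius j = \<gamma> / 2 ^ j"

definition entropy :: "real \<Rightarrow> real" where
  "entropy r = ln (real (seq_cov_num n G r z))"

definition dudley :: "real \<Rightarrow> real" where
  "dudley r = 30 * sqrt (2 * real n / \<delta>) * sqrt (entropy r) + (8 / \<delta>) * entropy r"

definition cover :: "nat \<Rightarrow> (nat \<Rightarrow> bool list \<Rightarrow> real) set" where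
  "cover j = (SOME V. finite V \<and> card V = seq_cov_num n G (radius j) z \<and> seq_cover n V G (radius j) z)"

definition link_set :: "nat \<Rightarrow> (nat \<Rightarrow> bool list \<Rightarrow> real) set" where
  "link_set j = (case j of
      0 \<Rightarrow> (\<lambda>v t u. clip \<gamma> (v t u - shrink \<gamma> v t u)) ` cover 0
    | Suc i \<Rightarrow> (\<lambda>(v, v') t u. clip (3 * radius j) (v t u - v' t u)) ` (cover j \<times> cover i))"

definition offset_sup :: "bool list \<Rightarrow> real" where
  "offset_sup y = (SUP g\<in>G. offset_eta_sum \<delta> K n p (\<lambda>t u. g (z t u)) y)"

definition top_max :: "bool list \<Rightarrow> real" where
  "top_max y = Max ((\<lambda>w. offset_eta_sum \<delta> K n p w y) ` shrink \<gamma> ` cover 0)"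

definition link_max :: "nat \<Rightarrow> bool list \<Rightarrow> real" where
  "link_max j y = Max ((\<lambda>w. eta_sum \<delta> n p w y) ` link_set j)"

lemma radius_pos: "radius j > 0"
  unfolding radius_def using \<gamma>_pos by simp

lemma radius_0: "radius 0 = \<gamma>"
  unfolding radius_def by simp

lemma radius_Suc: "radius j = 2 * radius (Suc j)"
  unfolding radius_def by simp

lemma radius_le: "radius j \<le> \<gamma>"
  unfolding radius_def using \<gamma>_pos by (simp add: divide_le_eq one_le_power)

lemma cover:
  "finite (cover j)" "card (cover j) = seq_cov_num n G (radius j) z" "seq_cover n (cover j) G (radius j) z"
proof -
  obtain V where "finite V" "card V = seq_cov_num n G (radius j) z" "seq_cover n V G (radius j) z"
    using seq_cov_num_attained[OF G_bounded radius_pos] .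
  then have "\<exists>V. finite V \<and> card V = seq_cov_num n G (radius j) z \<and> seq_cover n V G (radius j) z" by blast
  from someI_ex[OF this] show
    "finite (cover j)" "card (cover j) = seq_cov_num n G (radius j) z" "seq_cover n (cover j) G (radius j) z"
    unfolding cover_def by blast+
qed

lemma cover_ne: "cover j \<noteq> {}"
  using seq_cov_num_pos[OF G_bounded G_ne radius_pos[of j], where n = n and z = z] cover(2)[of j] by auto

lemma card_cover_mono: "card (cover j) \<le> card (cover (Suc j))"
  unfolding cover(2) using radius_pos radius_Suc[of j]
  by (intro seq_cov_num_antimono[OF G_bounded]) auto

lemma entropy_nonneg: "r > 0 \<Longrightarrow> 0 \<le> entropy r"
  unfolding entropy_def using seq_cov_num_pos[OF G_bounded G_ne] by simp

lemma entropy_antimono: "0 < r \<Longrightarrow> r \<le> r' \<Longrightarrow> entropy r' \<le> entropy r"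
  unfolding entropy_def using seq_cov_num_antimono[OF G_bounded] seq_cov_num_pos[OF G_bounded G_ne]
  by (smt (verit) ln_le_cancel_iff of_nat_0_less_iff of_nat_le_iff order.strict_trans1 zero_less_one)

lemma dudley_nonneg: "r > 0 \<Longrightarrow> 0 \<le> dudley r"
  unfolding dudley_def using entropy_nonneg \<delta> by simp

lemma dudley_antimono: "0 < r \<Longrightarrow> r \<le> r' \<Longrightarrow> dudley r' \<le> dudley r"
  unfolding dudley_def using entropy_antimono \<delta> by (intro add_mono mult_left_mono) auto

lemma integral_dudley:
  assumes "0 < \<alpha>"
  shows "integral {\<alpha>..\<gamma>} dudley = 30 * sqrt (2 * real n / \<delta>) * integral {\<alpha>..\<gamma>} (\<lambda>r. sqrt (entropy r))
      + (8 / \<delta>) * integral {\<alpha>..\<gamma>} entropy"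
proof -
  have integrable: "(\<lambda>r. sqrt (entropy r)) integrable_on {\<alpha>..\<gamma>}" "entropy integrable_on {\<alpha>..\<gamma>}"
    using assms entropy_antimono by (auto intro!: antitone_integrable_on)
  have "integral {\<alpha>..\<gamma>} dudley = integral {\<alpha>..\<gamma>} (\<lambda>r. 30 * sqrt (2 * real n / \<delta>) * sqrt (entropy r))
      + integral {\<alpha>..\<gamma>} (\<lambda>r. (8 / \<delta>) * entropy r)"
    unfolding dudley_def by (intro integral_add integrable_on_mult_right integrable)
  then show ?thesis by simp
qed

lemma expected_top_max_le: "tree_expect n p top_max \<le> (1 / \<delta>) * (entropy \<gamma> / ln (1 + K / 8))"
  using tree_expect_Max_offset_eta_sum_shrink_le[OF p01 \<delta> K_pos cover(1)[of 0] cover_ne[of 0], where c = \<gamma>]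
  unfolding top_max_def entropy_def cover(2) by (simp add: radius_def)

lemma finite_link_set: "finite (link_set j)"
  by (cases j) (auto simp: link_set_def cover(1))

lemma link_set_ne: "link_set j \<noteq> {}"
  by (cases j) (auto simp: link_set_def cover_ne)

lemma expected_link_max_le: "tree_expect n p (link_max j) \<le> integral {radius (Suc j)..radius j} dudley"
proof -
  have card_pos: "card (link_set j) > 0" using finite_link_set link_set_ne by (simp add: card_gt_0_iff)
  have "\<forall>w\<in>link_set j. \<forall>t u. \<bar>w t u\<bar> \<le> 3 * radius j"
  proof (cases j)
    case 0
    have "\<bar>clip \<gamma> x\<bar> \<le> 3 * \<gamma>" for x using abs_clip_le[of \<gamma> x] \<gamma>_pos by linarith
    then show ?thesis by (auto simp: link_set_def 0 radius_0)
  qed (auto simp: link_set_def abs_clip_le less_imp_le[OF radius_pos])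
  moreover have "ln (real (card (link_set j))) \<le> 2 * entropy (radius j)"
  proof (cases j)
    case 0
    have "card (link_set 0) \<le> card (cover 0)"
      using cover(1) by (simp add: link_set_def card_image_le)
    then have "ln (real (card (link_set j))) \<le> entropy (radius j)"
      using card_pos unfolding 0 entropy_def cover(2) by simp
    then show ?thesis using entropy_nonneg[OF radius_pos[of j]] by linarith
  next
    case (Suc i)
    have "card (link_set j) \<le> card (cover j \<times> cover i)"
      unfolding link_set_def Suc nat.case by (rule card_image_le) (simp add: cover(1))
    also have "\<dots> \<le> card (cover j) * card (cover j)"
      using card_cover_mono[of i] Suc by (simp add: card_cartesian_product)
    finally have "real (card (link_set j)) \<le> real (card (cover j)) * real (card (cover j))"
      by (simp only: of_nat_mult[symmetric] of_nat_le_iff)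
    then have "ln (real (card (link_set j))) \<le> ln (real (card (cover j)) * real (card (cover j)))"
      using card_pos by (intro ln_mono) auto
    also have "\<dots> = 2 * entropy (radius j)"
      using cover(1) cover_ne unfolding entropy_def cover(2)[symmetric] by (simp add: ln_mult card_gt_0_iff)
    finally show ?thesis .
  qed
  ultimately have "tree_expect n p (link_max j) \<le> (radius j / 2) * dudley (radius j)"
    unfolding link_max_def dudley_def
    by (rule tree_expect_Max_eta_sum_le_entropy[OF p01 \<delta> finite_link_set link_set_ne radius_pos])
  also have "\<dots> = (radius j - radius (Suc j)) * dudley (radius j)" using radius_Suc[of j] by simp
  also have "\<dots> \<le> integral {radius (Suc j)..radius j} dudley"
  proof (rule antitone_integral_ge)
    fix x y assume "radius (Suc j) \<le> x" "x \<le> y"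
    then show "dudley y \<le> dudley x" using radius_pos[of "Suc j"] by (intro dudley_antimono) auto
  qed (use radius_Suc[of j] radius_pos[of "Suc j"] in simp)
  finally show ?thesis .
qed


lemma dudley_integrable: "0 < a \<Longrightarrow> dudley integrable_on {a..b}"
  using dudley_antimono by (intro antitone_integrable_on) auto

lemma offset_sup_le_shrink:
  assumes "length y = n"
  shows "offset_sup y \<le> top_max y + real n * (2 * \<gamma> / \<delta>)"
  unfolding offset_sup_def
proof (rule cSUP_least[OF G_ne])
  fix g assume g: "g \<in> G"
  obtain v where v: "v \<in> cover 0" "\<forall>t\<in>{1..n}. \<bar>tree_at v t y - g (tree_at z t y)\<bar> \<le> \<gamma>"
    using cover(3)[of 0] g assms unfolding seq_cover_def radius_0 by blast
  have "offset_eta_sum \<delta> K n p (\<lambda>t u. g (z t u)) y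
      \<le> offset_eta_sum \<delta> K n p (shrink \<gamma> v) y + real n * (2 * \<gamma> / \<delta>)"
    using v G_bounded g K_pos
    by (intro offset_eta_sum_le_shrink[OF \<delta>(1) _ \<gamma>_pos]) (auto simp: tree_at_def)
  also have "offset_eta_sum \<delta> K n p (shrink \<gamma> v) y \<le> top_max y"
    unfolding top_max_def using cover(1) v by (intro Max_ge) auto
  finally show "offset_eta_sum \<delta> K n p (\<lambda>t u. g (z t u)) y \<le> top_max y + real n * (2 * \<gamma> / \<delta>)"
    by simp
qed

lemma chain_link_in_link_set:
  assumes "\<And>i. V i \<in> cover i"
  shows "chain_link \<gamma> V j \<in> link_set j"
proof (cases j)
  case 0
  show ?thesis unfolding 0 link_set_def nat.case
    by (rule image_eqI[where x = "V 0"]) (auto simp: fun_eq_iff chain_link_def assms)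
next
  case (Suc i)
  show ?thesis unfolding Suc link_set_def nat.case
    by (rule image_eqI[where x = "(V (Suc i), V i)"]) (auto simp: fun_eq_iff chain_link_def radius_def assms)
qed

lemma offset_sup_le_chain:
  assumes "length y = n"
  shows "offset_sup y \<le> top_max y + (\<Sum>j\<le>m. link_max j y) + real n * (radius m / \<delta>)"
  unfolding offset_sup_def
proof (rule cSUP_least[OF G_ne])
  fix g assume g: "g \<in> G"
  have "\<forall>j. \<exists>v. v \<in> cover j \<and> (\<forall>t\<in>{1..n}. \<bar>tree_at v t y - g (tree_at z t y)\<bar> \<le> radius j)"
    using cover(3) g assms unfolding seq_cover_def by blast
  then obtain V where V: "\<And>j. V j \<in> cover j"
    and V_approx: "\<And>j t. t \<in> {1..n} \<Longrightarrow> \<bar>tree_at (V j) t y - g (tree_at z t y)\<bar> \<le> radius j"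
    by metis
  have "offset_eta_sum \<delta> K n p (\<lambda>t u. g (z t u)) y \<le> offset_eta_sum \<delta> K n p (shrink \<gamma> (V 0)) y
      + (\<Sum>j\<le>m. eta_sum \<delta> n p (chain_link \<gamma> V j) y) + real n * (\<gamma> / 2 ^ m / \<delta>)"
    using V_approx G_bounded g K_pos
    by (intro offset_eta_sum_le_chain[OF \<delta>(1) _ \<gamma>_pos]) (auto simp: tree_at_def radius_def)
  also have "offset_eta_sum \<delta> K n p (shrink \<gamma> (V 0)) y \<le> top_max y"
    unfolding top_max_def using cover(1) V by (intro Max_ge) auto
  also have "(\<Sum>j\<le>m. eta_sum \<delta> n p (chain_link \<gamma> V j) y) \<le> (\<Sum>j\<le>m. link_max j y)"
    unfolding link_max_def using finite_link_set chain_link_in_link_set[OF V]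
    by (intro sum_mono Max_ge) auto
  finally show "offset_eta_sum \<delta> K n p (\<lambda>t u. g (z t u)) y
      \<le> top_max y + (\<Sum>j\<le>m. link_max j y) + real n * (radius m / \<delta>)"
    by (simp add: radius_def)
qed

lemma expected_offset_sup_le_shrink:
  "tree_expect n p offset_sup \<le> tree_expect n p top_max + real n * (2 * \<gamma> / \<delta>)"
proof -
  have "tree_expect n p offset_sup \<le> tree_expect n p (\<lambda>y. top_max y + real n * (2 * \<gamma> / \<delta>))"
    by (rule tree_expect_mono[OF p01]) (rule offset_sup_le_shrink)
  then show ?thesis by (simp add: tree_expect_add tree_expect_const)
qed

lemma expected_offset_sup_le_chain:
  "tree_expect n p offset_sup
    \<le> tree_expect n p top_max + integral {radius (Suc m)..\<gamma>} dudley + real n * (radius m / \<delta>)"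
proof -
  have "tree_expect n p offset_sup
      \<le> tree_expect n p (\<lambda>y. top_max y + (\<Sum>j\<le>m. link_max j y) + real n * (radius m / \<delta>))"
    by (rule tree_expect_mono[OF p01]) (rule offset_sup_le_chain)
  also have "\<dots> = tree_expect n p top_max + (\<Sum>j\<le>m. tree_expect n p (link_max j)) + real n * (radius m / \<delta>)"
    by (simp add: tree_expect_add tree_expect_const tree_expect_sum)
  also have "(\<Sum>j\<le>m. tree_expect n p (link_max j)) \<le> (\<Sum>j\<le>m. integral {radius (Suc j)..radius j} dudley)"
    by (intro sum_mono expected_link_max_le)
  also have "\<dots> = integral {radius (Suc m)..\<gamma>} dudley"
    unfolding radius_def
    by (rule sum_integral_dyadic[OF \<gamma>_pos dudley_integrable]) (simp add: \<gamma>_pos)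
  finally show ?thesis by simp
qed

lemma radius_bracket:
  assumes "0 < \<alpha>" "\<alpha> \<le> \<gamma> / 2"
  obtains m where "radius (Suc (Suc m)) < \<alpha>" "\<alpha> \<le> radius (Suc m)"
proof -
  obtain k where "\<gamma> / \<alpha> < 2 ^ k" using real_arch_pow[of 2] by auto
  then have ex: "radius k < \<alpha>" unfolding radius_def using assms by (simp add: field_simps)
  define k0 where "k0 = (LEAST k. radius k < \<alpha>)"
  have k0: "radius k0 < \<alpha>" unfolding k0_def by (rule LeastI[of _ k]) (rule ex)
  have k0_min: "\<alpha> \<le> radius j" if "j < k0" for j
    using not_less_Least[OF that[unfolded k0_def]] by simp
  have "\<alpha> \<le> radius 0" "\<alpha> \<le> radius 1" using assms by (simp_all add: radius_def)
  then have "k0 \<noteq> 0" "k0 \<noteq> 1" using k0 by (metis leD)+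
  then obtain m where "k0 = Suc (Suc m)" by (metis One_nat_def not0_implies_Suc)
  then show ?thesis using that k0 k0_min[of "Suc m"] by simp
qed

lemma expected_offset_sup_le:
  assumes "\<alpha> \<in> {0<..\<gamma>}"
  shows "tree_expect n p offset_sup \<le> tree_expect n p top_max + (4 * real n * \<alpha> / \<delta> + integral {\<alpha>..\<gamma>} dudley)"
proof -
  have \<alpha>: "0 < \<alpha>" "\<alpha> \<le> \<gamma>" using assms by auto
  have integral_ge: "integral {a..\<gamma>} dudley \<le> integral {\<alpha>..\<gamma>} dudley" if "\<alpha> \<le> a" "a \<le> \<gamma>" for a
  proof -
    have "integral {\<alpha>..a} dudley + integral {a..\<gamma>} dudley = integral {\<alpha>..\<gamma>} dudley"
      using that by (intro Henstock_Kurzweil_Integration.integral_combine dudley_integrable \<alpha>(1))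
    moreover have "0 \<le> integral {\<alpha>..a} dudley"
      using dudley_nonneg \<alpha> by (intro integral_nonneg dudley_integrable) auto
    ultimately show ?thesis by linarith
  qed
  show ?thesis
  proof (cases "\<gamma> / 2 < \<alpha>")
    case True
    then have "real n * (2 * \<gamma> / \<delta>) \<le> real n * (4 * \<alpha> / \<delta>)"
      using \<delta> by (intro mult_left_mono divide_right_mono) auto
    then have "real n * (2 * \<gamma> / \<delta>) \<le> 4 * real n * \<alpha> / \<delta>" by (simp add: ac_simps)
    moreover have "0 \<le> integral {\<alpha>..\<gamma>} dudley" using integral_ge[of \<gamma>] \<alpha> by simp
    ultimately show ?thesis using expected_offset_sup_le_shrink by linarith
  next
    case False
    then have "\<alpha> \<le> \<gamma> / 2" by simp
    then obtain m where m: "radius (Suc (Suc m)) < \<alpha>" "\<alpha> \<le> radius (Suc m)"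
      using radius_bracket[OF \<alpha>(1)] by blast
    have "radius m \<le> 4 * \<alpha>" using m radius_Suc[of m] radius_Suc[of "Suc m"] by linarith
    then have "real n * (radius m / \<delta>) \<le> real n * (4 * \<alpha> / \<delta>)"
      using \<delta> by (intro mult_left_mono divide_right_mono) auto
    then have "real n * (radius m / \<delta>) \<le> 4 * real n * \<alpha> / \<delta>" by (simp add: ac_simps)
    moreover have "integral {radius (Suc m)..\<gamma>} dudley \<le> integral {\<alpha>..\<gamma>} dudley"
      using m radius_le by (intro integral_ge) auto
    ultimately show ?thesis using expected_offset_sup_le_chain[of m] by linarith
  qed
qed

end

theorem theorem2:
  fixes \<delta> K \<gamma> :: real and n :: nat
    and G :: "('z \<Rightarrow> real) set"
    and p :: "nat \<Rightarrow> bool list \<Rightarrow> real"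
    and z :: "nat \<Rightarrow> bool list \<Rightarrow> 'z"
  assumes "0 < \<delta>" and "\<delta> < 1/2"
    and "G \<noteq> {}"
    and "\<forall>g\<in>G. \<forall>x. \<bar>g x\<bar> \<le> 1"
    and "\<forall>t\<in>{1..n}. \<forall>u::bool list. length u = t - 1 \<longrightarrow> 0 \<le> p t u \<and> p t u \<le> 1"
    and "K > 0" and "\<gamma> > 0"
  shows "tree_expect n p (\<lambda>y. SUP g\<in>G.
            (\<Sum>t\<in>{t\<in>{1..n}. \<delta> \<le> tree_at p t y \<and> tree_at p t y \<le> 1 - \<delta>}.
               eta (tree_at p t y) (y ! (t - 1)) * g (tree_at z t y) - K * (g (tree_at z t y))\<^sup>2))
    \<le> (1 / \<delta>) * (ln (real (seq_cov_num n G \<gamma> z)) / ln (1 + K / 8))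
      + (INF \<alpha>\<in>{0<..\<gamma>}.
           4 * real n * \<alpha> / \<delta>
           + 30 * sqrt (2 * real n / \<delta>) *
               integral {\<alpha>..\<gamma>} (\<lambda>\<rho>. sqrt (ln (real (seq_cov_num n G \<rho> z))))
           + (8 / \<delta>) * integral {\<alpha>..\<gamma>} (\<lambda>\<rho>. ln (real (seq_cov_num n G \<rho> z))))"
proof -
  interpret offset_chaining \<delta> K \<gamma> n G p z
    using assms by unfold_locales
  have "(\<lambda>y. SUP g\<in>G. (\<Sum>t\<in>{t\<in>{1..n}. \<delta> \<le> tree_at p t y \<and> tree_at p t y \<le> 1 - \<delta>}.
      eta (tree_at p t y) (y ! (t - 1)) * g (tree_at z t y) - K * (g (tree_at z t y))\<^sup>2)) = offset_sup"
    unfolding offset_sup_def offset_eta_sum_comp ..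
  moreover have "tree_expect n p offset_sup - tree_expect n p top_max
      \<le> (INF \<alpha>\<in>{0<..\<gamma>}. 4 * real n * \<alpha> / \<delta> + integral {\<alpha>..\<gamma>} dudley)"
  proof (rule cINF_greatest)
    fix \<alpha> assume "\<alpha> \<in> {0<..\<gamma>}"
    then show "tree_expect n p offset_sup - tree_expect n p top_max \<le> 4 * real n * \<alpha> / \<delta> + integral {\<alpha>..\<gamma>} dudley"
      using expected_offset_sup_le by fastforce
  qed (use \<gamma>_pos in simp)
  moreover have "(INF \<alpha>\<in>{0<..\<gamma>}. 4 * real n * \<alpha> / \<delta> + integral {\<alpha>..\<gamma>} dudley)
      = (INF \<alpha>\<in>{0<..\<gamma>}. 4 * real n * \<alpha> / \<delta> + 30 * sqrt (2 * real n / \<delta>) *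
          integral {\<alpha>..\<gamma>} (\<lambda>\<rho>. sqrt (entropy \<rho>)) + (8 / \<delta>) * integral {\<alpha>..\<gamma>} entropy)"
    by (rule INF_cong) (simp_all add: integral_dudley)
  ultimately show ?thesis
    using expected_top_max_le unfolding entropy_def by simp
qed

end
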